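(* Let $t,n\geq 1$ be integers and let $x,y\in\{0,1\}^{tn}$, with coordinates of $y$ indexed $0,1,\ldots,tn-1$. There exists $i<n$ such that $\mathsf{Rot}^{it}(y)<_{\mathrm{lex}}x$ if and only if at least one of the following holds: (1) there exists $w\in L_x$ such that $w$ appears as a contiguous substring of $y$ starting at a coordinate $j$ with $j\equiv 0\pmod t$; (2) there exist strings $w_1,w_2$ such that $w_1w_2\in L_x$, $w_2$ is a prefix of $y$, $w_1$ is a suffix of $y$, and $|w_1|\equiv 0\pmod t$.
   Context: $\mathsf{Rot}^k(y)$ denotes the string obtained from $y$ by cyclically rotating it rightwards by $k$ positions. $<_{\mathrm{lex}}$ is the lexicographic order on binary strings of equal length with $0<1$. For $x\in\{0,1\}^{m}$, the set of witnesses is $L_x=\{s0 : s1\text{ is a prefix of }x\}$. *)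

theory Defs
  imports Main "HOL-Library.Sublist"
begin

text \<open>Binary strings are lists of booleans, with False = 0 and True = 1.\<close>

definition Rot :: "nat \<Rightarrow> bool list \<Rightarrow> bool list" where
  "Rot k y = (let m = length y; r = k mod m in drop (m - r) y @ take (m - r) y)"

definition lex_less :: "bool list \<Rightarrow> bool list \<Rightarrow> bool" where
  "lex_less u v = (length u = length v \<and>
     (\<exists>p a b. u = p @ [False] @ a \<and> v = p @ [True] @ b))"

text \<open>Witness set L_x = { s0 : s1 is a prefix of x }.\<close>
definition witnesses :: "bool list \<Rightarrow> bool list set" where
  "witnesses x = {s @ [False] | s. prefix (s @ [True]) x}"

end

theory Submission
  imports Defs
begin

text \<open>A rotation of y is smaller than x exactly when some witness of x is a prefix of it.
  Rotations by multiples of t are the words (drop j y) @ (take j y) with t dividing j, and a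
  witness is a prefix of such a word either inside drop j y, which is an occurrence at a
  position divisible by t, or by covering all of drop j y, a suffix of length divisible by t,
  and continuing into a prefix of y.\<close>

lemma lex_less_iff_witness_prefix:
  assumes "length u = length x"
  shows "lex_less u x \<longleftrightarrow> (\<exists>w\<in>witnesses x. prefix w u)"
  using assms unfolding lex_less_def witnesses_def prefix_def by fastforce

lemma witness_length_le: "w \<in> witnesses x \<Longrightarrow> length w \<le> length x"
  unfolding witnesses_def prefix_def by auto

lemma Nil_notin_witnesses: "[] \<notin> witnesses x"
  unfolding witnesses_def by auto

lemma Rot_mult:
  assumes "length y = t * n" and "i < n"
  shows "Rot (i * t) y = drop (t * ((n - i) mod n)) y @ take (t * ((n - i) mod n)) y"
proof (cases "i = 0 \<or> t = 0")
  case True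
  then show ?thesis
    using assms unfolding Rot_def Let_def by auto
next
  case False
  then have "i mod n = i" and "(n - i) mod n = n - i"
    using assms(2) by simp_all
  then show ?thesis
    using assms(1) unfolding Rot_def Let_def by (simp add: diff_mult_distrib2 mult.commute)
qed

lemma ex_Rot_mult_iff:
  assumes "length y = t * n"
  shows "(\<exists>i<n. P (Rot (i * t) y)) \<longleftrightarrow> (\<exists>q<n. P (drop (t * q) y @ take (t * q) y))"
proof
  assume "\<exists>i<n. P (Rot (i * t) y)"
  then obtain i where i: "i < n" "P (Rot (i * t) y)" by blast
  then have "(n - i) mod n < n \<and> P (drop (t * ((n - i) mod n)) y @ take (t * ((n - i) mod n)) y)"
    using Rot_mult[OF assms i(1)] by simp
  then show "\<exists>q<n. P (drop (t * q) y @ take (t * q) y)" by blast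
next
  assume "\<exists>q<n. P (drop (t * q) y @ take (t * q) y)"
  then obtain q where q: "q < n" "P (drop (t * q) y @ take (t * q) y)" by blast
  have i: "(n - q) mod n < n"
    using q(1) by simp
  have "(n - (n - q) mod n) mod n = q"
    using q(1) by (cases "q = 0") auto
  then have "Rot ((n - q) mod n * t) y = drop (t * q) y @ take (t * q) y"
    using Rot_mult[OF assms i] by simp
  then have "(n - q) mod n < n \<and> P (Rot ((n - q) mod n * t) y)"
    using i q(2) by (simp only:)
  then show "\<exists>i<n. P (Rot (i * t) y)" by blast
qed

lemma ex_prefix_rotation_iff:
  assumes "\<forall>w\<in>W. length w \<le> length y"
  shows "(\<exists>w\<in>W. prefix w (drop j y @ take j y)) \<longleftrightarrow>
    (\<exists>w\<in>W. prefix w (drop j y)) \<or> (\<exists>w2. drop j y @ w2 \<in> W \<and> prefix w2 y)"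
proof -
  have "prefix w2 (take j y) \<longleftrightarrow> prefix w2 y" if "drop j y @ w2 \<in> W" for w2
  proof
    assume "prefix w2 y"
    moreover have "length w2 \<le> j"
      using assms that by fastforce
    ultimately have "length w2 \<le> length (take j y)"
      using prefix_length_le by fastforce
    then show "prefix w2 (take j y)"
      using \<open>prefix w2 y\<close> take_is_prefix by (rule prefix_length_prefix[rotated 2])
  qed (meson prefix_order.trans take_is_prefix)
  then show ?thesis
    unfolding prefix_append by blast
qed

lemma prefix_iff_take_length: "prefix w z \<longleftrightarrow> take (length w) z = w"
  by (metis append_eq_conv_conj prefix_def take_is_prefix)

lemma ex_prefix_drop_mult_iff:
  assumes "length y = t * n" and "w \<noteq> []"
  shows "(\<exists>q<n. prefix w (drop (t * q) y)) \<longleftrightarrow>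
    (\<exists>j. t dvd j \<and> j + length w \<le> length y \<and> take (length w) (drop j y) = w)"
proof
  assume "\<exists>q<n. prefix w (drop (t * q) y)"
  then obtain q where q: "prefix w (drop (t * q) y)" by blast
  then have "t * q + length w \<le> length y"
    using prefix_length_le[OF q] assms(2) by (cases "t * q \<le> length y") auto
  then show "\<exists>j. t dvd j \<and> j + length w \<le> length y \<and> take (length w) (drop j y) = w"
    using q by (intro exI[of _ "t * q"]) (simp add: prefix_iff_take_length)
next
  assume "\<exists>j. t dvd j \<and> j + length w \<le> length y \<and> take (length w) (drop j y) = w"
  then obtain q where q: "t * q + length w \<le> length y" "take (length w) (drop (t * q) y) = w"
    by (auto elim!: dvdE)
  have "length w > 0"
    using assms(2) by simp
  then have "t * q < t * n"
    using q(1) assms(1) by linarith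
  then have "q < n"
    by simp
  then show "\<exists>q<n. prefix w (drop (t * q) y)"
    using q(2) by (auto simp: prefix_iff_take_length)
qed

lemma ex_suffix_mult_iff:
  assumes "length y = t * n"
  shows "(\<exists>w1. suffix w1 y \<and> t dvd length w1 \<and> P w1) \<longleftrightarrow> (\<exists>q\<le>n. P (drop (t * q) y))"
proof
  assume "\<exists>w1. suffix w1 y \<and> t dvd length w1 \<and> P w1"
  then obtain w1 where w1: "suffix w1 y" "t dvd length w1" "P w1" by blast
  obtain k where k: "length w1 = t * k"
    using w1(2) by (elim dvdE)
  have "drop (t * (n - k)) y = w1"
    using w1(1) assms k by (auto simp: suffix_def diff_mult_distrib2)
  then have "n - k \<le> n \<and> P (drop (t * (n - k)) y)"
    using w1(3) by simp
  then show "\<exists>q\<le>n. P (drop (t * q) y)" ..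
next
  assume "\<exists>q\<le>n. P (drop (t * q) y)"
  then obtain q where "q \<le> n" "P (drop (t * q) y)" by blast
  moreover have "length (drop (t * q) y) = t * (n - q)"
    using assms by (simp add: diff_mult_distrib2)
  ultimately show "\<exists>w1. suffix w1 y \<and> t dvd length w1 \<and> P w1"
    by (intro exI[of _ "drop (t * q) y"]) (auto simp: suffix_drop)
qed

lemma ex_witness_drop_mult_iff:
  assumes "length y = t * n" and "[] \<notin> W"
  shows "(\<exists>q<n. \<exists>w\<in>W. prefix w (drop (t * q) y)) \<longleftrightarrow>
    (\<exists>w\<in>W. \<exists>j. t dvd j \<and> j + length w \<le> length y \<and> take (length w) (drop j y) = w)"
proof -
  have "(\<exists>q<n. \<exists>w\<in>W. prefix w (drop (t * q) y)) \<longleftrightarrow> (\<exists>w\<in>W. \<exists>q<n. prefix w (drop (t * q) y))"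
    by blast
  also have "\<dots> \<longleftrightarrow>
      (\<exists>w\<in>W. \<exists>j. t dvd j \<and> j + length w \<le> length y \<and> take (length w) (drop j y) = w)"
  proof (rule bex_cong[OF refl])
    fix w
    assume "w \<in> W"
    then have "w \<noteq> []"
      using assms(2) by blast
    then show "(\<exists>q<n. prefix w (drop (t * q) y)) \<longleftrightarrow>
        (\<exists>j. t dvd j \<and> j + length w \<le> length y \<and> take (length w) (drop j y) = w)"
      by (rule ex_prefix_drop_mult_iff[OF assms(1)])
  qed
  finally show ?thesis .
qed

lemma disj_ex_less_iff_disj_ex_le:
  fixes n :: nat
  assumes "P n \<Longrightarrow> Q"
  shows "(Q \<or> (\<exists>q<n. P q)) \<longleftrightarrow> (Q \<or> (\<exists>q\<le>n. P q))"
proof -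
  have "(\<exists>q\<le>n. P q) \<longleftrightarrow> (\<exists>q<n. P q) \<or> P n"
    by (auto simp: le_less)
  then show ?thesis
    using assms by blast
qed

lemma ex_rotation_mult_prefix_iff:
  assumes "length y = t * n" and "0 < n"
    and "[] \<notin> W" and "\<forall>w\<in>W. length w \<le> length y"
  shows "(\<exists>q<n. \<exists>w\<in>W. prefix w (drop (t * q) y @ take (t * q) y)) \<longleftrightarrow>
    (\<exists>w\<in>W. \<exists>j. t dvd j \<and> j + length w \<le> length y \<and> take (length w) (drop j y) = w) \<or>
    (\<exists>w1. suffix w1 y \<and> t dvd length w1 \<and> (\<exists>w2. w1 @ w2 \<in> W \<and> prefix w2 y))"
proof -
  let ?W = "\<lambda>w1. \<exists>w2. w1 @ w2 \<in> W \<and> prefix w2 y"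
  let ?occ = "\<exists>q<n. \<exists>w\<in>W. prefix w (drop (t * q) y)"
  have "(\<exists>q<n. \<exists>w\<in>W. prefix w (drop (t * q) y @ take (t * q) y)) \<longleftrightarrow>
      ?occ \<or> (\<exists>q<n. ?W (drop (t * q) y))"
    unfolding ex_prefix_rotation_iff[OF assms(4)] by blast
  also have "\<dots> \<longleftrightarrow> ?occ \<or> (\<exists>q\<le>n. ?W (drop (t * q) y))"
    \<comment> \<open>the empty suffix q = n gives an occurrence at position 0\<close>
  proof (rule disj_ex_less_iff_disj_ex_le[where P = "\<lambda>q. ?W (drop (t * q) y)"])
    assume "?W (drop (t * n) y)"
    then have "0 < n \<and> (\<exists>w\<in>W. prefix w (drop (t * 0) y))"
      using assms(1,2) by auto
    then show ?occ by (rule exI)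
  qed
  finally show ?thesis
    unfolding ex_witness_drop_mult_iff[OF assms(1,3)] ex_suffix_mult_iff[OF assms(1), where P = ?W] .
qed

theorem lemma9:
  fixes t n :: nat and x y :: "bool list"
  assumes "t \<ge> 1" and "n \<ge> 1"
    and "length x = t * n" and "length y = t * n"
  shows "(\<exists>i<n. lex_less (Rot (i * t) y) x) \<longleftrightarrow>
    ((\<exists>w \<in> witnesses x. \<exists>j. j mod t = 0 \<and> j + length w \<le> length y \<and>
         take (length w) (drop j y) = w) \<or>
     (\<exists>w1 w2. w1 @ w2 \<in> witnesses x \<and> prefix w2 y \<and> suffix w1 y \<and>
         length w1 mod t = 0))"
proof -
  have short: "\<forall>w\<in>witnesses x. length w \<le> length y"
    using witness_length_le assms(3,4) by fastforce
  have rotation_length: "length (drop j y @ take j y) = length x" for j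
    using assms(3,4) by (simp add: min_def)
  have "(\<exists>i<n. lex_less (Rot (i * t) y) x) \<longleftrightarrow>
      (\<exists>q<n. lex_less (drop (t * q) y @ take (t * q) y) x)"
    by (rule ex_Rot_mult_iff[OF assms(4)])
  also have "\<dots> \<longleftrightarrow> (\<exists>q<n. \<exists>w\<in>witnesses x. prefix w (drop (t * q) y @ take (t * q) y))"
    by (simp only: lex_less_iff_witness_prefix[OF rotation_length])
  also have "\<dots> \<longleftrightarrow> (\<exists>w\<in>witnesses x. \<exists>j. t dvd j \<and> j + length w \<le> length y \<and>
      take (length w) (drop j y) = w) \<or>
    (\<exists>w1. suffix w1 y \<and> t dvd length w1 \<and> (\<exists>w2. w1 @ w2 \<in> witnesses x \<and> prefix w2 y))"
    using assms(2) by (intro ex_rotation_mult_prefix_iff[OF assms(4) _ Nil_notin_witnesses short]) simp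
  finally show ?thesis
    unfolding mod_eq_0_iff_dvd by blast
qed

end
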